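(* Let $G$ be the $n$-cycle graph and let $\sigma$ be a $d$-dimensional signature on $G$. Then there exist $d_1,d_{-1}\in\mathbb{N}$ and $\theta_1,\dots,\theta_k\in(0,\pi)\cup(\pi,2\pi)$ with $d_1+d_{-1}+2k=d$ such that $$\sigma\cong\Big(\bigoplus_{i=1}^{d_1}\iota^1\Big)\oplus\Big(\bigoplus_{i=1}^{d_{-1}}\iota^{-1}\Big)\oplus\sigma^{\theta_1}\oplus\cdots\oplus\sigma^{\theta_k}.$$
   Context: The $n$-cycle graph has vertices $1,\dots,n$ and edges $\{i,i+1\}$ for $i=1,\dots,n$ (indices mod $n$), with positive weights. A $d$-dimensional signature is a map $\sigma$ from oriented edges to $\mathsf{O}(d)$ with $\sigma_{ji}=\sigma_{ij}^{\mathrm T}$. Two $d$-dimensional signatures satisfy $\sigma\cong\tau$ if there is $f:V\to\mathsf{O}(d)$ with $f(i)\sigma_{ij}=\tau_{ij}f(j)$ for every oriented edge $(i,j)$. The direct sum of signatures is the edgewise block-diagonal sum $(\sigma\oplus\sigma')_{ij}=\sigma_{ij}\oplus\sigma'_{ij}$. $\iota^1$ is the $1$-dimensional signature identically $1$; $\iota^{-1}$ is the $1$-dimensional signature with value $-1$ on the oriented edges $(1,2),(2,1)$ and $+1$ elsewhere. For $\theta\in\mathbb{R}$, $\sigma^\theta$ is the $2$-dimensional signature with $\sigma^\theta_{12}=\begin{bmatrix}\cos\theta&-\sin\theta\\ \sin\theta&\cos\theta\end{bmatrix}$ and $\sigma^\theta_{i,i+1}=I_2$ for $i=2,\dots,n$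 (with $\sigma^\theta_{ji}=(\sigma^\theta_{ij})^{\mathrm T}$). $\mathbb{N}$ includes $0$. *)

theory Defs
  imports "Jordan_Normal_Form.Matrix" Complex_Main
begin

definition orth_group :: "nat \<Rightarrow> real mat set" where
  "orth_group d = {Q. Q \<in> carrier_mat d d \<and> transpose_mat Q * Q = 1\<^sub>m d}"

definition cyc_adj :: "nat \<Rightarrow> nat \<Rightarrow> nat \<Rightarrow> bool" where
  "cyc_adj n i j \<longleftrightarrow> i \<in> {1..n} \<and> j \<in> {1..n} \<and>
     (j = i mod n + 1 \<or> i = j mod n + 1)"

text \<open>A d-dimensional signature on the n-cycle: a map from oriented edges to O(d)
  with sigma j i = (sigma i j)^T. Values on non-edges are irrelevant.\<close>
definition is_signature :: "nat \<Rightarrow> nat \<Rightarrow> (nat \<Rightarrow> nat \<Rightarrow> real mat) \<Rightarrow> bool" where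
  "is_signature n d \<sigma> \<longleftrightarrow>
     (\<forall>i j. cyc_adj n i j \<longrightarrow> \<sigma> i j \<in> orth_group d \<and> \<sigma> j i = transpose_mat (\<sigma> i j))"

definition sig_equiv :: "nat \<Rightarrow> nat \<Rightarrow> (nat \<Rightarrow> nat \<Rightarrow> real mat) \<Rightarrow> (nat \<Rightarrow> nat \<Rightarrow> real mat) \<Rightarrow> bool" where
  "sig_equiv n d \<sigma> \<tau> \<longleftrightarrow>
     (\<exists>f. (\<forall>i\<in>{1..n}. f i \<in> orth_group d) \<and>
          (\<forall>i j. cyc_adj n i j \<longrightarrow> f i * \<sigma> i j = \<tau> i j * f j))"

definition diag_sum :: "real mat \<Rightarrow> real mat \<Rightarrow> real mat" where
  "diag_sum A B = four_block_mat A (0\<^sub>m (dim_row A) (dim_col B)) (0\<^sub>m (dim_row B) (dim_col A)) B"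

definition sig_dsum :: "(nat \<Rightarrow> nat \<Rightarrow> real mat) \<Rightarrow> (nat \<Rightarrow> nat \<Rightarrow> real mat) \<Rightarrow> (nat \<Rightarrow> nat \<Rightarrow> real mat)" where
  "sig_dsum \<sigma> \<sigma>' = (\<lambda>i j. diag_sum (\<sigma> i j) (\<sigma>' i j))"

definition sig_empty :: "nat \<Rightarrow> nat \<Rightarrow> real mat" where
  "sig_empty = (\<lambda>i j. 1\<^sub>m 0)"

definition sig_dsum_list :: "(nat \<Rightarrow> nat \<Rightarrow> real mat) list \<Rightarrow> (nat \<Rightarrow> nat \<Rightarrow> real mat)" where
  "sig_dsum_list ss = foldr sig_dsum ss sig_empty"

definition iota_pos :: "nat \<Rightarrow> nat \<Rightarrow> real mat" where
  "iota_pos = (\<lambda>i j. mat 1 1 (\<lambda>_. 1))"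

definition iota_neg :: "nat \<Rightarrow> nat \<Rightarrow> real mat" where
  "iota_neg = (\<lambda>i j. if (i = 1 \<and> j = 2) \<or> (i = 2 \<and> j = 1)
                     then mat 1 1 (\<lambda>_. -1) else mat 1 1 (\<lambda>_. 1))"

definition rot_mat :: "real \<Rightarrow> real mat" where
  "rot_mat \<theta> = mat 2 2 (\<lambda>(r, c).
     if r = 0 \<and> c = 0 then cos \<theta> else if r = 0 \<and> c = 1 then - sin \<theta>
     else if r = 1 \<and> c = 0 then sin \<theta> else cos \<theta>)"

definition sig_theta :: "real \<Rightarrow> nat \<Rightarrow> nat \<Rightarrow> real mat" where
  "sig_theta \<theta> = (\<lambda>i j. if i = 1 \<and> j = 2 then rot_mat \<theta>
                        else if i = 2 \<and> j = 1 then transpose_mat (rot_mat \<theta>)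
                        else 1\<^sub>m 2)"

end

theory Submission
  imports Defs "Jordan_Normal_Form.Spectral_Radius"
begin

text \<open>Regauging each vertex \<open>i\<close> by the product of the edge matrices along the path
  \<open>2, 3, \<dots>, i\<close> makes the signature the identity on every edge except \<open>(1, 2)\<close>, which then carries
  the holonomy \<open>K \<in> O(d)\<close> of the cycle; a further constant gauge \<open>P\<close> replaces \<open>K\<close> by \<open>P K P\<^sup>T\<close>.
  It therefore suffices to bring an orthogonal matrix into the real normal form
  \<open>diag(I, -I, R(\<theta>\<^sub>1), \<dots>, R(\<theta>\<^sub>k))\<close> by an orthogonal similarity. This goes by induction on
  the dimension: an eigenvector for \<open>\<plusminus>1\<close> or, if there is none, the real and imaginary parts of a
  complex eigenvector span a \<open>K\<close>-invariant line or plane; Householder reflections move it onto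
  the first coordinates, and orthogonality makes its complement invariant as well.\<close>

lemma orth_groupI: "Q \<in> carrier_mat d d \<Longrightarrow> Q\<^sup>T * Q = 1\<^sub>m d \<Longrightarrow> Q \<in> orth_group d"
  unfolding orth_group_def by auto

lemma orth_groupD:
  assumes "Q \<in> orth_group d"
  shows "Q \<in> carrier_mat d d" "Q\<^sup>T * Q = 1\<^sub>m d" "Q * Q\<^sup>T = 1\<^sub>m d"
proof -
  show Q: "Q \<in> carrier_mat d d" and "Q\<^sup>T * Q = 1\<^sub>m d"
    using assms unfolding orth_group_def by auto
  then show "Q * Q\<^sup>T = 1\<^sub>m d"
    using mat_mult_left_right_inverse[of "Q\<^sup>T" d Q] by simp
qed

lemma orth_group_one: "1\<^sub>m d \<in> orth_group d"
  by (intro orth_groupI) auto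

lemma orth_group_transpose: "Q \<in> orth_group d \<Longrightarrow> Q\<^sup>T \<in> orth_group d"
  using orth_groupD[of Q d] by (intro orth_groupI) auto

lemma orth_group_mult:
  assumes P: "P \<in> orth_group d" and Q: "Q \<in> orth_group d"
  shows "P * Q \<in> orth_group d"
proof (rule orth_groupI)
  note p = orth_groupD[OF P] and q = orth_groupD[OF Q]
  show "P * Q \<in> carrier_mat d d"
    using p q by auto
  have "P\<^sup>T * (P * Q) = Q"
    using assoc_mult_mat[of "P\<^sup>T" d d P d Q d] p q by simp
  then show "(P * Q)\<^sup>T * (P * Q) = 1\<^sub>m d"
    using p q assoc_mult_mat[of "Q\<^sup>T" d d "P\<^sup>T" d "P * Q" d]
    by (simp add: transpose_mult[of P d d Q d])
qed

lemma scalar_prod_orth_group: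
  assumes Q: "Q \<in> orth_group d" and x: "x \<in> carrier_vec d" and y: "y \<in> carrier_vec d"
  shows "(Q *\<^sub>v x) \<bullet> (Q *\<^sub>v y) = x \<bullet> y"
proof -
  note q = orth_groupD[OF Q]
  have "(Q *\<^sub>v x) \<bullet> (Q *\<^sub>v y) = (Q\<^sup>T *\<^sub>v (Q *\<^sub>v x)) \<bullet> y"
    using q x y by (simp add: transpose_vec_mult_scalar[of Q d d y])
  also have "Q\<^sup>T *\<^sub>v (Q *\<^sub>v x) = x"
    using q x by (simp flip: assoc_mult_mat_vec[of _ d d _ d])
  finally show ?thesis .
qed

lemma orth_group_eigenvalue:
  fixes K :: "real mat"
  assumes K: "K \<in> orth_group d" and "eigenvalue K c"
  shows "c = 1 \<or> c = -1"
proof -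
  obtain v where v: "v \<in> carrier_vec d" "v \<noteq> 0\<^sub>v d" and Kv: "K *\<^sub>v v = c \<cdot>\<^sub>v v"
    using assms orth_groupD(1)[OF K] unfolding eigenvalue_def eigenvector_def by auto
  have "c * c * (v \<bullet> v) = v \<bullet> v"
    using scalar_prod_orth_group[OF K v(1) v(1)] v(1) unfolding Kv by simp
  moreover have "v \<bullet> v \<noteq> 0"
    using conjugate_square_eq_0_vec[OF v(1)] v(2) by simp
  ultimately have "c * c = 1"
    by simp
  then show ?thesis
    by (simp add: square_eq_1_iff)
qed

lemma eq_mat_by_mult_vecI:
  fixes A B :: "real mat"
  assumes A: "A \<in> carrier_mat n m" and B: "B \<in> carrier_mat n m"
    and eq: "\<And>v. v \<in> carrier_vec m \<Longrightarrow> A *\<^sub>v v = B *\<^sub>v v"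
  shows "A = B"
proof (rule eq_matI)
  fix i j assume "i < dim_row B" "j < dim_col B"
  then have "(A *\<^sub>v unit_vec m j) $ i = (B *\<^sub>v unit_vec m j) $ i"
    using eq B by simp
  then show "A $$ (i, j) = B $$ (i, j)"
    using A B \<open>i < dim_row B\<close> \<open>j < dim_col B\<close> by simp
qed (use A B in auto)

lemma diag_sum_eq:
  assumes "A \<in> carrier_mat a a" "B \<in> carrier_mat b b"
  shows "diag_sum A B = four_block_mat A (0\<^sub>m a b) (0\<^sub>m b a) B"
  using assms unfolding diag_sum_def by auto

lemma diag_sum_carrier [simp]:
  "A \<in> carrier_mat a a \<Longrightarrow> B \<in> carrier_mat b b \<Longrightarrow> diag_sum A B \<in> carrier_mat (a + b) (a + b)"
  unfolding diag_sum_def by auto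

lemma diag_sum_mult:
  assumes "A \<in> carrier_mat a a" "B \<in> carrier_mat b b" "C \<in> carrier_mat a a" "E \<in> carrier_mat b b"
  shows "diag_sum A B * diag_sum C E = diag_sum (A * C) (B * E)"
  using assms by (simp add: diag_sum_eq[of _ a _ b]
      mult_four_block_mat[OF assms(1) _ _ assms(2) assms(3) _ _ assms(4)])

lemma diag_sum_transpose:
  assumes "A \<in> carrier_mat a a" "B \<in> carrier_mat b b"
  shows "(diag_sum A B)\<^sup>T = diag_sum A\<^sup>T B\<^sup>T"
  using assms by (simp add: diag_sum_eq transpose_four_block_mat[of _ a a _ b _ b])

lemma diag_sum_one: "diag_sum (1\<^sub>m a) (1\<^sub>m b) = 1\<^sub>m (a + b)"
  unfolding diag_sum_def by simp

lemma diag_sum_orth_group: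
  assumes A: "A \<in> orth_group a" and B: "B \<in> orth_group b"
  shows "diag_sum A B \<in> orth_group (a + b)"
  using orth_groupD[OF A] orth_groupD[OF B]
  by (intro orth_groupI) (simp_all add: diag_sum_transpose[of _ a _ b] diag_sum_mult[of _ a _ b] diag_sum_one)

lemma diag_sum_mult_vec:
  assumes "A \<in> carrier_mat a a" "B \<in> carrier_mat b b" "x \<in> carrier_vec a" "y \<in> carrier_vec b"
  shows "diag_sum A B *\<^sub>v (x @\<^sub>v y) = (A *\<^sub>v x) @\<^sub>v (B *\<^sub>v y)"
  using assms by (simp add: diag_sum_eq mult_mat_vec_split)

subsection \<open>Householder reflections\<close>

text \<open>For \<open>w = 0\<close> the division by zero yields \<open>0\<close>, so \<open>householder 0\<close> is the identity.\<close>

definition householder :: "real vec \<Rightarrow> real mat" where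
  "householder w = mat (dim_vec w) (dim_vec w)
     (\<lambda>(i, j). (if i = j then 1 else 0) - 2 / (w \<bullet> w) * (w $ i * w $ j))"

lemma householder_carrier [simp]: "w \<in> carrier_vec n \<Longrightarrow> householder w \<in> carrier_mat n n"
  unfolding householder_def by auto

lemma householder_transpose: "(householder w)\<^sup>T = householder w"
  unfolding householder_def by (rule eq_matI) (auto simp: mult.commute)

lemma householder_mult_vec:
  assumes w: "w \<in> carrier_vec n" and v: "v \<in> carrier_vec n"
  shows "householder w *\<^sub>v v = v - (2 / (w \<bullet> w) * (w \<bullet> v)) \<cdot>\<^sub>v w"
proof (rule eq_vecI)
  fix i assume "i < dim_vec (v - (2 / (w \<bullet> w) * (w \<bullet> v)) \<cdot>\<^sub>v w)"
  then have i: "i < n"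
    using v w by auto
  let ?c = "2 / (w \<bullet> w)"
  have "(householder w *\<^sub>v v) $ i
      = (\<Sum>j = 0..<n. ((if i = j then 1 else 0) - ?c * (w $ i * w $ j)) * v $ j)"
    using w v i unfolding householder_def by (auto simp: scalar_prod_def row_def)
  also have "\<dots> = (\<Sum>j = 0..<n. (if i = j then v $ j else 0) - ?c * w $ i * (w $ j * v $ j))"
    by (rule sum.cong) (auto simp: left_diff_distrib)
  also have "\<dots> = (\<Sum>j = 0..<n. (if i = j then v $ j else 0)) - ?c * w $ i * (\<Sum>j = 0..<n. w $ j * v $ j)"
    by (simp add: sum_subtractf sum_distrib_left)
  also have "\<dots> = v $ i - ?c * w $ i * (w \<bullet> v)"
    using i v by (simp add: scalar_prod_def)
  finally show "(householder w *\<^sub>v v) $ i = (v - (?c * (w \<bullet> v)) \<cdot>\<^sub>v w) $ i"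
    using i v w by simp
qed (use w v in \<open>auto simp: householder_def\<close>)

lemma householder_involutive:
  assumes w: "w \<in> carrier_vec n" and v: "v \<in> carrier_vec n"
  shows "householder w *\<^sub>v (householder w *\<^sub>v v) = v"
proof (cases "w \<bullet> w = 0")
  case True
  then show ?thesis
    using w v by (simp add: householder_mult_vec) (intro eq_vecI; simp)
next
  case False
  let ?c = "2 / (w \<bullet> w)"
  have Hv: "householder w *\<^sub>v v = v - (?c * (w \<bullet> v)) \<cdot>\<^sub>v w"
    by (rule householder_mult_vec[OF w v])
  have "w \<bullet> (householder w *\<^sub>v v) = w \<bullet> v - ?c * (w \<bullet> v) * (w \<bullet> w)"
    unfolding Hv using w v by (simp add: scalar_prod_minus_distrib[of _ n])
  also have "\<dots> = - (w \<bullet> v)"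
    using False by simp
  finally show ?thesis
    using w v Hv householder_carrier[OF w] by (intro eq_vecI) (auto simp: householder_mult_vec)
qed

lemma householder_orth_group:
  assumes w: "w \<in> carrier_vec n"
  shows "householder w \<in> orth_group n"
proof (rule orth_groupI)
  show H: "householder w \<in> carrier_mat n n"
    using w by simp
  show "(householder w)\<^sup>T * householder w = 1\<^sub>m n"
    unfolding householder_transpose
    by (rule eq_mat_by_mult_vecI[OF mult_carrier_mat[OF H H] one_carrier_mat])
       (simp add: assoc_mult_mat_vec[OF H H] householder_involutive[OF w])
qed

lemma householder_maps_unit_vec:
  assumes a: "a \<in> carrier_vec n" and b: "b \<in> carrier_vec n" and "a \<bullet> a = 1" "b \<bullet> b = 1"
  shows "householder (a - b) *\<^sub>v a = b"
proof (cases "a = b")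
  case True
  then show ?thesis
    using b by (simp add: householder_mult_vec[of _ n]) (intro eq_vecI; simp)
next
  case False
  have w: "a - b \<in> carrier_vec n"
    using a b by simp
  have "(a - b) \<bullet> (a - b) = 2 * ((a - b) \<bullet> a)"
    using assms comm_scalar_prod[OF a b]
    by (simp add: minus_scalar_prod_distrib[of _ n] scalar_prod_minus_distrib[of _ n])
  moreover have "(a - b) \<bullet> (a - b) \<noteq> 0"
  proof
    assume "(a - b) \<bullet> (a - b) = 0"
    then have ab: "a - b = 0\<^sub>v n"
      using conjugate_square_eq_0_vec[OF w] by simp
    have "a = b"
    proof (rule eq_vecI)
      fix i assume "i < dim_vec b"
      then show "a $ i = b $ i"
        using arg_cong[OF ab, of "\<lambda>v. v $ i"] a b by simp
    qed (use a b in simp)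
    then show False
      using False by simp
  qed
  ultimately have "2 / ((a - b) \<bullet> (a - b)) * ((a - b) \<bullet> a) = 1"
    by simp
  then show ?thesis
    using a b by (simp add: householder_mult_vec[OF w a]) (intro eq_vecI; simp)
qed

lemma householder_fixes_orthogonal:
  assumes a: "a \<in> carrier_vec n" and b: "b \<in> carrier_vec n" and c: "c \<in> carrier_vec n"
    and "a \<bullet> c = 0" "b \<bullet> c = 0"
  shows "householder (a - b) *\<^sub>v c = c"
proof -
  have "(a - b) \<bullet> c = 0"
    using assms by (simp add: minus_scalar_prod_distrib[of _ n])
  then show ?thesis
    using a b c by (simp add: householder_mult_vec[of _ n]) (intro eq_vecI; simp)
qed

lemma exists_orth_group_to_unit_vec:
  assumes u: "u \<in> carrier_vec n" "u \<bullet> u = 1" and n: "0 < n"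
  shows "\<exists>P \<in> orth_group n. P *\<^sub>v u = unit_vec n 0"
  using u n householder_orth_group[of "u - unit_vec n 0" n]
    householder_maps_unit_vec[of u n "unit_vec n 0"]
  by auto

lemma exists_orth_group_to_unit_vec_pair:
  assumes u0: "u0 \<in> carrier_vec n" "u0 \<bullet> u0 = 1" and u1: "u1 \<in> carrier_vec n" "u1 \<bullet> u1 = 1"
    and orth: "u0 \<bullet> u1 = 0" and n: "1 < n"
  shows "\<exists>P \<in> orth_group n. P *\<^sub>v u0 = unit_vec n 0 \<and> P *\<^sub>v u1 = unit_vec n 1"
proof -
  let ?e0 = "unit_vec n 0" and ?e1 = "unit_vec n 1"
  obtain P1 where P1: "P1 \<in> orth_group n" and P1u0: "P1 *\<^sub>v u0 = ?e0"
    using exists_orth_group_to_unit_vec[OF u0] n by auto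
  define v where "v = P1 *\<^sub>v u1"
  have v: "v \<in> carrier_vec n"
    unfolding v_def using orth_groupD(1)[OF P1] u1 by simp
  have "v \<bullet> v = 1" "?e0 \<bullet> v = 0"
    unfolding v_def P1u0[symmetric] using scalar_prod_orth_group[OF P1] u0 u1 orth by simp_all
  then obtain P2 where P2: "P2 \<in> orth_group n" and "P2 *\<^sub>v v = ?e1" "P2 *\<^sub>v ?e0 = ?e0"
    using householder_orth_group[of "v - ?e1" n] householder_maps_unit_vec[of v n ?e1]
      householder_fixes_orthogonal[of v n ?e1 ?e0] v n by auto
  then have "P2 * P1 *\<^sub>v u0 = ?e0" "P2 * P1 *\<^sub>v u1 = ?e1"
    using orth_groupD(1)[OF P1] orth_groupD(1)[OF P2] u0 u1 P1u0 by (simp_all add: v_def)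
  then show ?thesis
    using orth_group_mult[OF P2 P1] by blast
qed

subsection \<open>Splitting off invariant subspaces\<close>

lemma four_block_mat_eq_oneD:
  assumes eq: "four_block_mat A B C D = 1\<^sub>m (k + m)"
    and carriers: "A \<in> carrier_mat k k" "B \<in> carrier_mat k m" "C \<in> carrier_mat m k" "D \<in> carrier_mat m m"
  shows "A = 1\<^sub>m k" "B = 0\<^sub>m k m" "C = 0\<^sub>m m k" "D = 1\<^sub>m m"
proof -
  have entry: "four_block_mat A B C D $$ (i, j) = 1\<^sub>m (k + m) $$ (i, j)" for i j
    using eq by simp
  show "A = 1\<^sub>m k"
  proof (rule eq_matI)
    fix i j assume "i < dim_row (1\<^sub>m k)" "j < dim_col (1\<^sub>m k)"
    then show "A $$ (i, j) = 1\<^sub>m k $$ (i, j)"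
      using entry[of i j] carriers by simp
  qed (use carriers in auto)
  show "B = 0\<^sub>m k m"
  proof (rule eq_matI)
    fix i j assume "i < dim_row (0\<^sub>m k m)" "j < dim_col (0\<^sub>m k m)"
    then show "B $$ (i, j) = 0\<^sub>m k m $$ (i, j)"
      using entry[of i "j + k"] carriers by simp
  qed (use carriers in auto)
  show "C = 0\<^sub>m m k"
  proof (rule eq_matI)
    fix i j assume "i < dim_row (0\<^sub>m m k)" "j < dim_col (0\<^sub>m m k)"
    then show "C $$ (i, j) = 0\<^sub>m m k $$ (i, j)"
      using entry[of "i + k" j] carriers by simp
  qed (use carriers in auto)
  show "D = 1\<^sub>m m"
  proof (rule eq_matI)
    fix i j assume "i < dim_row (1\<^sub>m m)" "j < dim_col (1\<^sub>m m)"
    then show "D $$ (i, j) = 1\<^sub>m m $$ (i, j)"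
      using entry[of "i + k" "j + k"] carriers by simp
  qed (use carriers in auto)
qed

lemma four_block_mat_upper_triangular_orth_group:
  fixes A X B :: "real mat"
  assumes M: "four_block_mat A X (0\<^sub>m m k) B \<in> orth_group (k + m)"
    and A: "A \<in> carrier_mat k k" and X: "X \<in> carrier_mat k m" and B: "B \<in> carrier_mat m m"
  shows "X = 0\<^sub>m k m" "B \<in> orth_group m"
proof -
  let ?M = "four_block_mat A X (0\<^sub>m m k) B"
  have "?M\<^sup>T * ?M = four_block_mat A\<^sup>T (0\<^sub>m k m) X\<^sup>T B\<^sup>T * ?M"
    using A X B by (simp add: transpose_four_block_mat[OF A X _ B])
  also have "\<dots> = four_block_mat (A\<^sup>T * A + 0\<^sub>m k m * 0\<^sub>m m k) (A\<^sup>T * X + 0\<^sub>m k m * B)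
      (X\<^sup>T * A + B\<^sup>T * 0\<^sub>m m k) (X\<^sup>T * X + B\<^sup>T * B)"
    by (rule mult_four_block_mat) (use A X B in auto)
  also have "\<dots> = four_block_mat (A\<^sup>T * A) (A\<^sup>T * X) (X\<^sup>T * A) (X\<^sup>T * X + B\<^sup>T * B)"
    using A X B by simp
  finally have "four_block_mat (A\<^sup>T * A) (A\<^sup>T * X) (X\<^sup>T * A) (X\<^sup>T * X + B\<^sup>T * B) = 1\<^sub>m (k + m)"
    using orth_groupD(2)[OF M] by simp
  moreover have "A\<^sup>T * A \<in> carrier_mat k k" "A\<^sup>T * X \<in> carrier_mat k m"
    "X\<^sup>T * A \<in> carrier_mat m k" "X\<^sup>T * X + B\<^sup>T * B \<in> carrier_mat m m"
    using A X B by auto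
  ultimately have AA: "A\<^sup>T * A = 1\<^sub>m k" and AX: "A\<^sup>T * X = 0\<^sub>m k m"
    and XXBB: "X\<^sup>T * X + B\<^sup>T * B = 1\<^sub>m m"
    by (rule four_block_mat_eq_oneD)+
  have "A * A\<^sup>T = 1\<^sub>m k"
    using mat_mult_left_right_inverse[of "A\<^sup>T" k A] A AA by simp
  then have "X = A * (A\<^sup>T * X)"
    using assoc_mult_mat[of A k k "A\<^sup>T" k X m] A X by simp
  then show X0: "X = 0\<^sub>m k m"
    unfolding AX using A by simp
  show "B \<in> orth_group m"
    using XXBB B unfolding X0 by (intro orth_groupI) simp_all
qed

lemma orth_group_block_diagI:
  fixes M A :: "real mat"
  assumes M: "M \<in> orth_group (k + m)" and A: "A \<in> carrier_mat k k"
    and first_cols: "\<And>i j. i < k + m \<Longrightarrow> j < k \<Longrightarrow> M $$ (i, j) = (if i < k then A $$ (i, j) else 0)"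
  shows "\<exists>B \<in> orth_group m. M = diag_sum A B"
proof -
  define X where "X = mat k m (\<lambda>(i, j). M $$ (i, j + k))"
  define B where "B = mat m m (\<lambda>(i, j). M $$ (i + k, j + k))"
  have X: "X \<in> carrier_mat k m" and B: "B \<in> carrier_mat m m"
    unfolding X_def B_def by simp_all
  have M_blocks: "M = four_block_mat A X (0\<^sub>m m k) B"
  proof (rule eq_matI)
    fix i j assume "i < dim_row (four_block_mat A X (0\<^sub>m m k) B)"
      "j < dim_col (four_block_mat A X (0\<^sub>m m k) B)"
    then have "i < k + m" "j < k + m"
      using A X B by auto
    then show "M $$ (i, j) = four_block_mat A X (0\<^sub>m m k) B $$ (i, j)"
      using A first_cols[of i j] by (cases "j < k") (auto simp: X_def B_def)
  qed (use orth_groupD(1)[OF M] A X B in auto)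
  then have "X = 0\<^sub>m k m" "B \<in> orth_group m"
    using four_block_mat_upper_triangular_orth_group[OF _ A X B] M by auto
  then show ?thesis
    using M_blocks diag_sum_eq[OF A B] by (intro bexI[of _ B]) auto
qed

definition orth_similar :: "nat \<Rightarrow> real mat \<Rightarrow> real mat \<Rightarrow> bool" where
  "orth_similar d K D \<longleftrightarrow> (\<exists>P \<in> orth_group d. P * K * P\<^sup>T = D)"

lemma orth_similar_diag_sumI:
  fixes K P A :: "real mat" and u :: "nat \<Rightarrow> real vec"
  assumes K: "K \<in> orth_group (k + m)" and P: "P \<in> orth_group (k + m)" and A: "A \<in> carrier_mat k k"
    and u: "\<And>j. j < k \<Longrightarrow> u j \<in> carrier_vec (k + m)"
    and Pu: "\<And>j. j < k \<Longrightarrow> P *\<^sub>v u j = unit_vec (k + m) j"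
    and PKu: "\<And>i j. i < k + m \<Longrightarrow> j < k \<Longrightarrow> (P *\<^sub>v (K *\<^sub>v u j)) $ i = (if i < k then A $$ (i, j) else 0)"
  shows "\<exists>B \<in> orth_group m. orth_similar (k + m) K (diag_sum A B)"
proof -
  let ?n = "k + m"
  note p = orth_groupD[OF P] and kk = orth_groupD[OF K]
  have PTe: "P\<^sup>T *\<^sub>v unit_vec ?n j = u j" if "j < k" for j
    using Pu[OF that] u[OF that] p assoc_mult_mat_vec[of "P\<^sup>T" ?n ?n P ?n "u j"] by simp
  have "(P * K * P\<^sup>T) $$ (i, j) = (if i < k then A $$ (i, j) else 0)" if "i < ?n" "j < k" for i j
  proof -
    have "(P * K * P\<^sup>T) $$ (i, j) = (P * K * P\<^sup>T *\<^sub>v unit_vec ?n j) $ i"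
      using p kk that by simp
    also have "P * K * P\<^sup>T *\<^sub>v unit_vec ?n j = P *\<^sub>v (K *\<^sub>v u j)"
      using assoc_mult_mat_vec[of "P * K" ?n ?n "P\<^sup>T" ?n "unit_vec ?n j"]
        assoc_mult_mat_vec[of P ?n ?n K ?n "u j"] p(1) kk(1) u[OF that(2)] PTe[OF that(2)]
      by simp
    finally show ?thesis
      using PKu that by simp
  qed
  then obtain B where "B \<in> orth_group m" "P * K * P\<^sup>T = diag_sum A B"
    using orth_group_block_diagI[OF orth_group_mult[OF orth_group_mult[OF P K] orth_group_transpose[OF P]] A]
    by blast
  then show ?thesis
    unfolding orth_similar_def using P by blast
qed

lemma eigenvalue_diag_sum_right:
  fixes A B :: "real mat"
  assumes A: "A \<in> carrier_mat k k" and B: "B \<in> carrier_mat m m" and "eigenvalue B c"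
  shows "eigenvalue (diag_sum A B) c"
proof -
  obtain v where v: "v \<in> carrier_vec m" "v \<noteq> 0\<^sub>v m" and Bv: "B *\<^sub>v v = c \<cdot>\<^sub>v v"
    using \<open>eigenvalue B c\<close> B unfolding eigenvalue_def eigenvector_def by auto
  have "0\<^sub>v k @\<^sub>v v \<noteq> 0\<^sub>v k @\<^sub>v 0\<^sub>v m"
    using v append_vec_eq[of "0\<^sub>v k" k "0\<^sub>v k" v "0\<^sub>v m"] by auto
  moreover have "0\<^sub>v k @\<^sub>v 0\<^sub>v m = 0\<^sub>v (k + m)"
    by (intro eq_vecI) auto
  moreover have "diag_sum A B *\<^sub>v (0\<^sub>v k @\<^sub>v v) = c \<cdot>\<^sub>v (0\<^sub>v k @\<^sub>v v)"
    using A B v Bv by (simp add: diag_sum_mult_vec) (intro eq_vecI; simp)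
  ultimately show ?thesis
    unfolding eigenvalue_def eigenvector_def using diag_sum_carrier[OF A B] v
    by (intro exI[of _ "0\<^sub>v k @\<^sub>v v"]) auto
qed

lemma eigenvalue_orth_similar:
  fixes K D :: "real mat"
  assumes "orth_similar d K D" and K: "K \<in> carrier_mat d d" and "eigenvalue D c"
  shows "eigenvalue K c"
proof -
  obtain P where P: "P \<in> orth_group d" and PK: "P * K * P\<^sup>T = D"
    using assms unfolding orth_similar_def by auto
  note p = orth_groupD[OF P]
  obtain z where z: "z \<in> carrier_vec d" "z \<noteq> 0\<^sub>v d" and Dz: "D *\<^sub>v z = c \<cdot>\<^sub>v z"
    using \<open>eigenvalue D c\<close> p K unfolding eigenvalue_def eigenvector_def PK[symmetric] by auto
  have "K * P\<^sup>T = (P\<^sup>T * P) * (K * P\<^sup>T)"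
    using p K by simp
  also have "\<dots> = P\<^sup>T * D"
    unfolding PK[symmetric] using p K by (subst assoc_mult_mat[of _ d d _ d _ d]) auto
  finally have KP: "K * P\<^sup>T = P\<^sup>T * D" .
  have "K *\<^sub>v (P\<^sup>T *\<^sub>v z) = (K * P\<^sup>T) *\<^sub>v z"
    by (rule assoc_mult_mat_vec[symmetric]) (use p K z in auto)
  also have "\<dots> = P\<^sup>T *\<^sub>v (D *\<^sub>v z)"
    unfolding KP by (rule assoc_mult_mat_vec) (use p z PK K in auto)
  also have "\<dots> = c \<cdot>\<^sub>v (P\<^sup>T *\<^sub>v z)"
    using p z by (simp add: Dz mult_mat_vec)
  finally have "K *\<^sub>v (P\<^sup>T *\<^sub>v z) = c \<cdot>\<^sub>v (P\<^sup>T *\<^sub>v z)" .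
  moreover have "P\<^sup>T *\<^sub>v z \<noteq> 0\<^sub>v d"
    using z p assoc_mult_mat_vec[of P d d "P\<^sup>T" d z] by auto
  ultimately show ?thesis
    unfolding eigenvalue_def eigenvector_def using K p z by (intro exI[of _ "P\<^sup>T *\<^sub>v z"]) auto
qed

lemma orth_group_split_eigenvalue:
  fixes K :: "real mat"
  assumes K: "K \<in> orth_group d" and "eigenvalue K c"
  shows "\<exists>m B. d = Suc m \<and> B \<in> orth_group m \<and> orth_similar d K (diag_sum (mat 1 1 (\<lambda>_. c)) B) \<and>
    (\<forall>c'. eigenvalue B c' \<longrightarrow> eigenvalue K c')"
proof -
  note kk = orth_groupD[OF K]
  obtain m where d: "d = Suc m"
    using eigenvalue_imp_nonzero_dim[OF kk(1) \<open>eigenvalue K c\<close>] not0_implies_Suc by blast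
  obtain v where v: "v \<in> carrier_vec d" "v \<noteq> 0\<^sub>v d" and Kv: "K *\<^sub>v v = c \<cdot>\<^sub>v v"
    using \<open>eigenvalue K c\<close> kk unfolding eigenvalue_def eigenvector_def by auto
  define u where "u = (1 / sqrt (v \<bullet> v)) \<cdot>\<^sub>v v"
  have "v \<bullet> v > 0"
    using conjugate_square_greater_0_vec[OF v(1)] v(2) by simp
  then have u: "u \<in> carrier_vec d" "u \<bullet> u = 1" and Ku: "K *\<^sub>v u = c \<cdot>\<^sub>v u"
    unfolding u_def using v Kv kk by (auto simp: mult_mat_vec)
  obtain P where P: "P \<in> orth_group d" and Pu: "P *\<^sub>v u = unit_vec d 0"
    using exists_orth_group_to_unit_vec[OF u] d by auto
  have "P *\<^sub>v (K *\<^sub>v u) = c \<cdot>\<^sub>v unit_vec d 0"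
    using Ku Pu orth_groupD(1)[OF P] u by (simp add: mult_mat_vec)
  then have "(P *\<^sub>v (K *\<^sub>v u)) $ i = (if i < 1 then mat 1 1 (\<lambda>_. c) $$ (i, j) else 0)"
    if "i < d" "j < 1" for i j
    using that by simp
  then obtain B where B: "B \<in> orth_group m" and KB: "orth_similar d K (diag_sum (mat 1 1 (\<lambda>_. c)) B)"
    using orth_similar_diag_sumI[of K 1 m P "mat 1 1 (\<lambda>_. c)" "\<lambda>_. u"] K P Pu u d by auto
  moreover have "eigenvalue K c'" if "eigenvalue B c'" for c'
    using eigenvalue_orth_similar[OF KB kk(1)] eigenvalue_diag_sum_right[of "mat 1 1 (\<lambda>_. c)" 1 B m c']
      orth_groupD(1)[OF B] that by simp
  ultimately show ?thesis
    using d by blast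
qed

lemma rot_mat_carrier [simp]: "rot_mat t \<in> carrier_mat 2 2"
  unfolding rot_mat_def by simp

lemma orth_similar_split_invariant_plane:
  fixes K :: "real mat"
  assumes K: "K \<in> orth_group (Suc (Suc m))"
    and u0: "u0 \<in> carrier_vec (Suc (Suc m))" "u0 \<bullet> u0 = 1"
    and u1: "u1 \<in> carrier_vec (Suc (Suc m))" "u1 \<bullet> u1 = 1"
    and orth: "u0 \<bullet> u1 = 0"
    and Ku0: "K *\<^sub>v u0 = cos t \<cdot>\<^sub>v u0 + sin t \<cdot>\<^sub>v u1"
    and Ku1: "K *\<^sub>v u1 = (- sin t) \<cdot>\<^sub>v u0 + cos t \<cdot>\<^sub>v u1"
  shows "\<exists>B \<in> orth_group m. orth_similar (Suc (Suc m)) K (diag_sum (rot_mat t) B)"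
proof -
  let ?n = "Suc (Suc m)"
  obtain P where P: "P \<in> orth_group ?n"
    and Pu0: "P *\<^sub>v u0 = unit_vec ?n 0" and Pu1: "P *\<^sub>v u1 = unit_vec ?n 1"
    using exists_orth_group_to_unit_vec_pair[OF u0 u1 orth] by auto
  define u where "u j = (if j = 0 then u0 else u1)" for j :: nat
  have "P *\<^sub>v (K *\<^sub>v u0) = cos t \<cdot>\<^sub>v unit_vec ?n 0 + sin t \<cdot>\<^sub>v unit_vec ?n 1"
    "P *\<^sub>v (K *\<^sub>v u1) = (- sin t) \<cdot>\<^sub>v unit_vec ?n 0 + cos t \<cdot>\<^sub>v unit_vec ?n 1"
    unfolding Ku0 Ku1 using orth_groupD(1)[OF P] u0 u1 Pu0 Pu1
    by (simp_all add: mult_mat_vec mult_add_distrib_mat_vec[of _ ?n ?n])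
  then have "(P *\<^sub>v (K *\<^sub>v u j)) $ i = (if i < 2 then rot_mat t $$ (i, j) else 0)"
    if "i < ?n" "j < 2" for i j
    using that by (cases "j = 0") (auto simp: u_def rot_mat_def)
  moreover have "u j \<in> carrier_vec ?n" "P *\<^sub>v u j = unit_vec ?n j" if "j < 2" for j
    using that Pu0 Pu1 u0 u1 by (auto simp: u_def less_2_cases_iff)
  ultimately show ?thesis
    using orth_similar_diag_sumI[of K 2 m P "rot_mat t" u] K P by simp
qed

lemma orth_similar_diag_sum_right:
  assumes KAB: "orth_similar (k + m) K (diag_sum A B)" and BD: "orth_similar m B D"
    and K: "K \<in> carrier_mat (k + m) (k + m)" and A: "A \<in> carrier_mat k k" and B: "B \<in> carrier_mat m m"
  shows "orth_similar (k + m) K (diag_sum A D)"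
proof -
  let ?n = "k + m"
  obtain P where P: "P \<in> orth_group ?n" and PK: "P * K * P\<^sup>T = diag_sum A B"
    using KAB unfolding orth_similar_def by auto
  obtain Q where Q: "Q \<in> orth_group m" and QB: "Q * B * Q\<^sup>T = D"
    using BD unfolding orth_similar_def by auto
  define R where "R = diag_sum (1\<^sub>m k) Q"
  have R: "R \<in> orth_group ?n"
    unfolding R_def by (rule diag_sum_orth_group[OF orth_group_one Q])
  note p = orth_groupD[OF P] and q = orth_groupD[OF Q] and r = orth_groupD[OF R]
  have "(R * P) * K * (R * P)\<^sup>T = R * (P * K * P\<^sup>T) * R\<^sup>T"
    using p r K by (simp add: transpose_mult[of _ ?n ?n _ ?n] assoc_mult_mat[of _ ?n ?n _ ?n _ ?n])
  also have "\<dots> = diag_sum A D"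
    unfolding PK R_def using A B q QB
    by (simp add: diag_sum_transpose[of _ k _ m] diag_sum_mult[of _ k _ m])
  finally show ?thesis
    unfolding orth_similar_def using orth_group_mult[OF R P] by blast
qed

subsection \<open>Invariant planes\<close>

lemma map_vec_Re_Im_mult_of_real_mat:
  fixes K :: "real mat"
  assumes K: "K \<in> carrier_mat n d" and w: "w \<in> carrier_vec d"
  shows "map_vec Re (map_mat complex_of_real K *\<^sub>v w) = K *\<^sub>v map_vec Re w"
    and "map_vec Im (map_mat complex_of_real K *\<^sub>v w) = K *\<^sub>v map_vec Im w"
  using K w by (auto intro!: eq_vecI simp: scalar_prod_def)

lemma real_mat_complex_eigenpair:
  fixes K :: "real mat"
  assumes K: "K \<in> carrier_mat d d" and d: "0 < d"
  shows "\<exists>x \<in> carrier_vec d. \<exists>y \<in> carrier_vec d. \<exists>a c. (x \<noteq> 0\<^sub>v d \<or> y \<noteq> 0\<^sub>v d) \<and>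
    K *\<^sub>v x = a \<cdot>\<^sub>v x + c \<cdot>\<^sub>v y \<and> K *\<^sub>v y = (- c) \<cdot>\<^sub>v x + a \<cdot>\<^sub>v y"
proof -
  have Kc: "map_mat complex_of_real K \<in> carrier_mat d d"
    using K by simp
  obtain l where "eigenvalue (map_mat complex_of_real K) l"
    using spectrum_non_empty[OF Kc d] unfolding spectrum_def by auto
  then obtain w where w: "w \<in> carrier_vec d" "w \<noteq> 0\<^sub>v d" and Kw: "map_mat complex_of_real K *\<^sub>v w = l \<cdot>\<^sub>v w"
    unfolding eigenvalue_def eigenvector_def using Kc by auto
  define x where "x = map_vec Re w"
  define y where "y = map_vec Im w"
  have "K *\<^sub>v x = map_vec Re (l \<cdot>\<^sub>v w)" "K *\<^sub>v y = map_vec Im (l \<cdot>\<^sub>v w)"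
    unfolding x_def y_def Kw[symmetric] using map_vec_Re_Im_mult_of_real_mat[OF K w(1)] by simp_all
  then have "K *\<^sub>v x = Re l \<cdot>\<^sub>v x + (- Im l) \<cdot>\<^sub>v y" "K *\<^sub>v y = (- (- Im l)) \<cdot>\<^sub>v x + Re l \<cdot>\<^sub>v y"
    unfolding x_def y_def using w by (auto intro!: eq_vecI simp: algebra_simps)
  moreover have "x \<noteq> 0\<^sub>v d \<or> y \<noteq> 0\<^sub>v d"
  proof (rule ccontr)
    assume "\<not> (x \<noteq> 0\<^sub>v d \<or> y \<noteq> 0\<^sub>v d)"
    then have "Re (w $ i) = 0" "Im (w $ i) = 0" if "i < d" for i
      using that w(1) index_map_vec(1)[of i w Re] index_map_vec(1)[of i w Im]
      unfolding x_def y_def by auto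
    then have "w = 0\<^sub>v d"
      using w(1) by (intro eq_vecI) (auto simp: complex_eq_iff)
    then show False
      using w(2) by simp
  qed
  moreover have "x \<in> carrier_vec d" "y \<in> carrier_vec d"
    unfolding x_def y_def using w(1) by auto
  ultimately show ?thesis
    by blast
qed

lemma scalar_prod_lincomb2:
  fixes x y :: "real vec"
  assumes x: "x \<in> carrier_vec d" and y: "y \<in> carrier_vec d"
  shows "(a \<cdot>\<^sub>v x + b \<cdot>\<^sub>v y) \<bullet> (c \<cdot>\<^sub>v x + e \<cdot>\<^sub>v y)
    = a * c * (x \<bullet> x) + (a * e + b * c) * (x \<bullet> y) + b * e * (y \<bullet> y)"
proof -
  have "(a \<cdot>\<^sub>v x + b \<cdot>\<^sub>v y) \<bullet> (c \<cdot>\<^sub>v x + e \<cdot>\<^sub>v y) = (\<Sum>i = 0..<d. (a * x$i + b * y$i) * (c * x$i + e * y$i))"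
    using x y unfolding scalar_prod_def by simp
  also have "\<dots> = (\<Sum>i = 0..<d. a * c * (x$i * x$i) + (a * e + b * c) * (x$i * y$i) + b * e * (y$i * y$i))"
    by (rule sum.cong) (auto simp: algebra_simps)
  also have "\<dots> = a * c * (x \<bullet> x) + (a * e + b * c) * (x \<bullet> y) + b * e * (y \<bullet> y)"
    using x y unfolding scalar_prod_def by (simp add: sum.distrib sum_distrib_left)
  finally show ?thesis .
qed

text \<open>The Gram matrix \<open>[[X, Z], [Z, Y]]\<close> is invariant under \<open>[[a, -c], [c, a]]\<close> with \<open>c \<noteq> 0\<close>:
  it is a multiple of the identity and the map is a rotation.\<close>

lemma rotation_invariant_gram:
  fixes a c X Y Z :: real
  assumes XY: "X + Y > 0" and c: "c \<noteq> 0"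
    and E1: "a * a * X + 2 * a * c * Z + c * c * Y = X"
    and E2: "c * c * X - 2 * a * c * Z + a * a * Y = Y"
    and E3: "- (a * c) * X + (a * a - c * c) * Z + a * c * Y = Z"
  shows "a * a + c * c = 1 \<and> X = Y \<and> Z = 0"
proof -
  have "(a * a + c * c - 1) * (X + Y) = 0"
    using E1 E2 by (simp add: algebra_simps)
  then have s: "a * a + c * c = 1"
    using XY by simp
  have "c * (c * (Y - X) + 2 * a * Z) = X * (1 - (a * a + c * c))"
    using E1 by (simp add: algebra_simps)
  then have "c * (c * (Y - X) + 2 * a * Z) = 0"
    using s by simp
  then have "c * (Y - X) + 2 * a * Z = 0"
    using c by simp
  then have i: "c * (X - Y) = 2 * a * Z"
    by (simp add: algebra_simps)
  have "c * (a * (X - Y) + 2 * c * Z) = Z * ((a * a + c * c) - 1)"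
    using E3 by (simp add: algebra_simps)
  then have "c * (a * (X - Y) + 2 * c * Z) = 0"
    using s by simp
  then have "a * (X - Y) + 2 * c * Z = 0"
    using c by simp
  then have ii: "a * (X - Y) = - 2 * c * Z"
    by (simp add: algebra_simps)
  have "(a * a + c * c) * (X - Y) = a * (a * (X - Y)) + c * (c * (X - Y))"
    by (simp add: algebra_simps)
  also have "\<dots> = 0"
    unfolding i ii by (simp add: algebra_simps)
  finally have "X = Y"
    using s by simp
  then show ?thesis
    using ii s c by simp
qed

lemma orth_group_invariant_pair:
  fixes K :: "real mat"
  assumes K: "K \<in> orth_group d" and x: "x \<in> carrier_vec d" and y: "y \<in> carrier_vec d"
    and nz: "x \<noteq> 0\<^sub>v d \<or> y \<noteq> 0\<^sub>v d" and c: "c \<noteq> 0"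
    and Kx: "K *\<^sub>v x = a \<cdot>\<^sub>v x + c \<cdot>\<^sub>v y" and Ky: "K *\<^sub>v y = (- c) \<cdot>\<^sub>v x + a \<cdot>\<^sub>v y"
  shows "a * a + c * c = 1 \<and> x \<bullet> x = y \<bullet> y \<and> x \<bullet> y = 0 \<and> 0 < x \<bullet> x"
proof -
  have "(K *\<^sub>v x) \<bullet> (K *\<^sub>v x) = x \<bullet> x" "(K *\<^sub>v y) \<bullet> (K *\<^sub>v y) = y \<bullet> y" "(K *\<^sub>v x) \<bullet> (K *\<^sub>v y) = x \<bullet> y"
    using scalar_prod_orth_group[OF K] x y by auto
  then have E: "a * a * (x \<bullet> x) + 2 * a * c * (x \<bullet> y) + c * c * (y \<bullet> y) = x \<bullet> x"
    "c * c * (x \<bullet> x) - 2 * a * c * (x \<bullet> y) + a * a * (y \<bullet> y) = y \<bullet> y"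
    "- (a * c) * (x \<bullet> x) + (a * a - c * c) * (x \<bullet> y) + a * c * (y \<bullet> y) = x \<bullet> y"
    unfolding Kx Ky scalar_prod_lincomb2[OF x y] by (simp_all add: algebra_simps)
  have "0 \<le> x \<bullet> x" "0 \<le> y \<bullet> y" "0 < x \<bullet> x \<or> 0 < y \<bullet> y"
    using nz conjugate_square_greater_0_vec[OF x] conjugate_square_greater_0_vec[OF y]
      conjugate_square_ge_0_vec[of x] conjugate_square_ge_0_vec[of y] by auto
  then have "0 < x \<bullet> x + y \<bullet> y"
    by linarith
  from rotation_invariant_gram[OF this c E] show ?thesis
    using \<open>0 < x \<bullet> x + y \<bullet> y\<close> by simp
qed

lemma orth_group_rotation_plane:
  fixes K :: "real mat"
  assumes K: "K \<in> orth_group d" and d: "0 < d" and no_eigenvalue: "\<And>c. \<not> eigenvalue K c"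
  shows "\<exists>t u0 u1. t \<in> {0<..<pi} \<union> {pi<..<2*pi} \<and>
    u0 \<in> carrier_vec d \<and> u0 \<bullet> u0 = 1 \<and> u1 \<in> carrier_vec d \<and> u1 \<bullet> u1 = 1 \<and> u0 \<bullet> u1 = 0 \<and>
    K *\<^sub>v u0 = cos t \<cdot>\<^sub>v u0 + sin t \<cdot>\<^sub>v u1 \<and> K *\<^sub>v u1 = (- sin t) \<cdot>\<^sub>v u0 + cos t \<cdot>\<^sub>v u1"
proof -
  note kk = orth_groupD[OF K]
  obtain x y a c where x: "x \<in> carrier_vec d" and y: "y \<in> carrier_vec d"
    and nz: "x \<noteq> 0\<^sub>v d \<or> y \<noteq> 0\<^sub>v d"
    and Kx: "K *\<^sub>v x = a \<cdot>\<^sub>v x + c \<cdot>\<^sub>v y" and Ky: "K *\<^sub>v y = (- c) \<cdot>\<^sub>v x + a \<cdot>\<^sub>v y"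
    using real_mat_complex_eigenpair[OF kk(1) d] by blast
  have "c \<noteq> 0"
  proof
    assume "c = 0"
    then have "K *\<^sub>v x = a \<cdot>\<^sub>v x" "K *\<^sub>v y = a \<cdot>\<^sub>v y"
      using Kx Ky x y by (auto intro: eq_vecI)
    then have "eigenvalue K a"
      using nz x y kk(1) unfolding eigenvalue_def eigenvector_def by auto
    then show False
      using no_eigenvalue by blast
  qed
  then have ac: "a * a + c * c = 1" and xy: "x \<bullet> x = y \<bullet> y" "x \<bullet> y = 0" "0 < x \<bullet> x"
    using orth_group_invariant_pair[OF K x y nz _ Kx Ky] by auto
  define r where "r = sqrt (x \<bullet> x)"
  have r: "0 < r" "r * r = x \<bullet> x"
    unfolding r_def using xy by (auto simp flip: real_sqrt_mult)
  define u0 where "u0 = (1 / r) \<cdot>\<^sub>v x"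
  define u1 where "u1 = (1 / r) \<cdot>\<^sub>v y"
  have u: "u0 \<in> carrier_vec d" "u0 \<bullet> u0 = 1" "u1 \<in> carrier_vec d" "u1 \<bullet> u1 = 1" "u0 \<bullet> u1 = 0"
    unfolding u0_def u1_def using x y xy r by (auto simp: field_simps)
  have Ku: "K *\<^sub>v u0 = a \<cdot>\<^sub>v u0 + c \<cdot>\<^sub>v u1" "K *\<^sub>v u1 = (- c) \<cdot>\<^sub>v u0 + a \<cdot>\<^sub>v u1"
    unfolding u0_def u1_def using kk x y Kx Ky by (auto intro!: eq_vecI simp: mult_mat_vec algebra_simps)
  obtain t where t: "0 \<le> t" "t < 2 * pi" "a = cos t" "c = sin t"
    using sincos_total_2pi[of a c] ac by (auto simp: power2_eq_square)
  then have "t \<in> {0<..<pi} \<union> {pi<..<2*pi}"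
    using \<open>c \<noteq> 0\<close> by (cases "t = 0 \<or> t = pi") auto
  then show ?thesis
    using u Ku t by blast
qed

lemma orthonormal_pair_dim_ge_2:
  fixes u0 u1 :: "real vec"
  assumes "u0 \<in> carrier_vec d" "u1 \<in> carrier_vec d" "u0 \<bullet> u0 = 1" "u1 \<bullet> u1 = 1" "u0 \<bullet> u1 = 0"
  shows "2 \<le> d"
proof (rule ccontr)
  assume "\<not> 2 \<le> d"
  then consider "d = 0" | "d = 1"
    by linarith
  then show False
  proof cases
    case 1
    then show False
      using assms by (simp add: scalar_prod_def)
  next
    case 2
    then have "u0 $ 0 * u0 $ 0 = 1" "u1 $ 0 * u1 $ 0 = 1" "u0 $ 0 * u1 $ 0 = 0"
      using assms by (auto simp: scalar_prod_def)
    then show False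
      by (metis mult_zero_left mult_zero_right zero_neq_one mult_eq_0_iff)
  qed
qed

lemma orth_group_split_rotation:
  fixes K :: "real mat"
  assumes K: "K \<in> orth_group d" and d: "0 < d" and no_eigenvalue: "\<And>c. \<not> eigenvalue K c"
  shows "\<exists>m t B. d = Suc (Suc m) \<and> t \<in> {0<..<pi} \<union> {pi<..<2*pi} \<and> B \<in> orth_group m \<and>
    orth_similar d K (diag_sum (rot_mat t) B) \<and> (\<forall>c. \<not> eigenvalue B c)"
proof -
  obtain t u0 u1 where t: "t \<in> {0<..<pi} \<union> {pi<..<2*pi}"
    and u: "u0 \<in> carrier_vec d" "u0 \<bullet> u0 = 1" "u1 \<in> carrier_vec d" "u1 \<bullet> u1 = 1" "u0 \<bullet> u1 = 0"
    and Ku: "K *\<^sub>v u0 = cos t \<cdot>\<^sub>v u0 + sin t \<cdot>\<^sub>v u1" "K *\<^sub>v u1 = (- sin t) \<cdot>\<^sub>v u0 + cos t \<cdot>\<^sub>v u1"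
    using orth_group_rotation_plane[OF K d no_eigenvalue] by blast
  obtain m where m: "d = Suc (Suc m)"
    using orthonormal_pair_dim_ge_2[of u0 d u1] u by (metis add_2_eq_Suc le_Suc_ex)
  then obtain B where B: "B \<in> orth_group m" and KB: "orth_similar d K (diag_sum (rot_mat t) B)"
    using orth_similar_split_invariant_plane[of K m u0 u1 t] K u Ku by blast
  moreover have "\<not> eigenvalue B c" for c
    using eigenvalue_orth_similar[OF KB orth_groupD(1)[OF K]] eigenvalue_diag_sum_right[OF _ orth_groupD(1)[OF B]]
      no_eigenvalue by (metis rot_mat_carrier)
  ultimately show ?thesis
    using m t by blast
qed

subsection \<open>Normal form of orthogonal matrices\<close>

definition orth_normal_form :: "nat \<Rightarrow> nat \<Rightarrow> real list \<Rightarrow> real mat" where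
  "orth_normal_form d1 dm1 \<theta>s = foldr diag_sum
     (replicate d1 (mat 1 1 (\<lambda>_. 1)) @ replicate dm1 (mat 1 1 (\<lambda>_. -1)) @ map rot_mat \<theta>s) (1\<^sub>m 0)"

lemma orth_normal_form_simps:
  "orth_normal_form (Suc d1) dm1 \<theta>s = diag_sum (mat 1 1 (\<lambda>_. 1)) (orth_normal_form d1 dm1 \<theta>s)"
  "orth_normal_form 0 (Suc dm1) \<theta>s = diag_sum (mat 1 1 (\<lambda>_. -1)) (orth_normal_form 0 dm1 \<theta>s)"
  "orth_normal_form 0 0 (\<theta> # \<theta>s) = diag_sum (rot_mat \<theta>) (orth_normal_form 0 0 \<theta>s)"
  by (simp_all add: orth_normal_form_def)

lemma orth_group_rotation_normal_form:
  fixes K :: "real mat"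
  assumes "K \<in> orth_group d" and "\<And>c. \<not> eigenvalue K c"
  shows "\<exists>\<theta>s. (\<forall>\<theta>\<in>set \<theta>s. \<theta> \<in> {0<..<pi} \<union> {pi<..<2*pi}) \<and> 2 * length \<theta>s = d \<and>
    orth_similar d K (orth_normal_form 0 0 \<theta>s)"
  using assms
proof (induction d arbitrary: K rule: less_induct)
  case (less d)
  note K = less.prems(1) and Kc = orth_groupD(1)[OF less.prems(1)]
  show ?case
  proof (cases "d = 0")
    case True
    have "orth_similar d K (orth_normal_form 0 0 [])"
      unfolding orth_similar_def orth_normal_form_def using True Kc orth_group_one[of 0]
      by (intro bexI[of _ "1\<^sub>m 0"] eq_matI) auto
    then show ?thesis
      using True by auto
  next
    case False
    then obtain m t B where d: "d = Suc (Suc m)" and t: "t \<in> {0<..<pi} \<union> {pi<..<2*pi}"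
      and B: "B \<in> orth_group m" and KB: "orth_similar d K (diag_sum (rot_mat t) B)"
      and "\<And>c. \<not> eigenvalue B c"
      using orth_group_split_rotation[OF K _ less.prems(2)] by blast
    then obtain \<theta>s where \<theta>s: "\<forall>\<theta>\<in>set \<theta>s. \<theta> \<in> {0<..<pi} \<union> {pi<..<2*pi}" "2 * length \<theta>s = m"
      and BN: "orth_similar m B (orth_normal_form 0 0 \<theta>s)"
      using less.IH[of m B] by auto
    have "orth_similar d K (orth_normal_form 0 0 (t # \<theta>s))"
      using orth_similar_diag_sum_right[of 2 m K _ B, OF _ BN] KB Kc B d
      by (simp add: orth_normal_form_simps orth_groupD)
    then show ?thesis
      using \<theta>s t d by (intro exI[of _ "t # \<theta>s"]) auto
  qed
qed

text \<open>The two implications make the induction go through: after splitting off a block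
  \<open>-1\<close>, the remaining block has no eigenvalue \<open>1\<close>, so its normal form has no \<open>+1\<close> entries.\<close>

lemma orth_group_normal_form:
  fixes K :: "real mat"
  assumes "K \<in> orth_group d"
  shows "\<exists>d1 dm1 \<theta>s. (\<forall>\<theta>\<in>set \<theta>s. \<theta> \<in> {0<..<pi} \<union> {pi<..<2*pi}) \<and> d1 + dm1 + 2 * length \<theta>s = d \<and>
    orth_similar d K (orth_normal_form d1 dm1 \<theta>s) \<and>
    (\<not> eigenvalue K 1 \<longrightarrow> d1 = 0) \<and> (\<not> eigenvalue K (-1) \<longrightarrow> dm1 = 0)"
  using assms
proof (induction d arbitrary: K rule: less_induct)
  case (less d)
  note K = less.prems and Kc = orth_groupD(1)[OF less.prems]
  consider (pos) "eigenvalue K 1" | (neg) "\<not> eigenvalue K 1" "eigenvalue K (-1)"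
    | (none) "\<not> eigenvalue K 1" "\<not> eigenvalue K (-1)"
    by blast
  then show ?case
  proof cases
    case pos
    then obtain m B where d: "d = Suc m" and B: "B \<in> orth_group m"
      and KB: "orth_similar d K (diag_sum (mat 1 1 (\<lambda>_. 1)) B)"
      and eigenvalue_B: "\<And>c. eigenvalue B c \<Longrightarrow> eigenvalue K c"
      using orth_group_split_eigenvalue[OF K] by blast
    then obtain d1 dm1 \<theta>s where \<theta>s: "\<forall>\<theta>\<in>set \<theta>s. \<theta> \<in> {0<..<pi} \<union> {pi<..<2*pi}" "d1 + dm1 + 2 * length \<theta>s = m"
      and BN: "orth_similar m B (orth_normal_form d1 dm1 \<theta>s)" and Bneg: "\<not> eigenvalue B (-1) \<longrightarrow> dm1 = 0"
      using less.IH[of m B] by auto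
    have "orth_similar d K (orth_normal_form (Suc d1) dm1 \<theta>s)"
      using orth_similar_diag_sum_right[of 1 m K _ B, OF _ BN] KB Kc B d
      by (simp add: orth_normal_form_simps orth_groupD)
    moreover have "\<not> eigenvalue K (-1) \<longrightarrow> dm1 = 0"
      using eigenvalue_B Bneg by blast
    ultimately show ?thesis
      using \<theta>s d pos by (intro exI[of _ "Suc d1"] exI[of _ dm1] exI[of _ \<theta>s]) auto
  next
    case neg
    then obtain m B where d: "d = Suc m" and B: "B \<in> orth_group m"
      and KB: "orth_similar d K (diag_sum (mat 1 1 (\<lambda>_. -1)) B)"
      and "\<not> eigenvalue B 1"
      using orth_group_split_eigenvalue[OF K] by blast
    then obtain dm1 \<theta>s where \<theta>s: "\<forall>\<theta>\<in>set \<theta>s. \<theta> \<in> {0<..<pi} \<union> {pi<..<2*pi}" "dm1 + 2 * length \<theta>s = m"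
      and BN: "orth_similar m B (orth_normal_form 0 dm1 \<theta>s)"
      using less.IH[of m B] by auto
    have "orth_similar d K (orth_normal_form 0 (Suc dm1) \<theta>s)"
      using orth_similar_diag_sum_right[of 1 m K _ B, OF _ BN] KB Kc B d
      by (simp add: orth_normal_form_simps orth_groupD)
    then show ?thesis
      using \<theta>s d neg by (intro exI[of _ 0] exI[of _ "Suc dm1"] exI[of _ \<theta>s]) auto
  next
    case none
    then have "\<not> eigenvalue K c" for c
      using orth_group_eigenvalue[OF K] by blast
    then show ?thesis
      using orth_group_rotation_normal_form[OF K] none by (metis add_0)
  qed
qed

lemma foldr_diag_sum_carrier:
  assumes "\<forall>B \<in> set Bs. square_mat B"
  shows "foldr diag_sum Bs (1\<^sub>m 0) \<in> carrier_mat (sum_list (map dim_row Bs)) (sum_list (map dim_row Bs))"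
  using assms
proof (induction Bs)
  case (Cons B Bs)
  have B: "B \<in> carrier_mat (dim_row B) (dim_row B)"
    using Cons.prems by (intro carrier_matI) auto
  have "\<forall>B \<in> set Bs. square_mat B"
    using Cons.prems by simp
  then show ?case
    using diag_sum_carrier[OF B Cons.IH] by simp
qed simp

lemma transpose_foldr_diag_sum:
  assumes "\<forall>B \<in> set Bs. square_mat B"
  shows "(foldr diag_sum Bs (1\<^sub>m 0))\<^sup>T = foldr diag_sum (map transpose_mat Bs) (1\<^sub>m 0)"
  using assms
proof (induction Bs)
  case (Cons B Bs)
  have B: "B \<in> carrier_mat (dim_row B) (dim_row B)"
    using Cons.prems by (intro carrier_matI) auto
  have "\<forall>B \<in> set Bs. square_mat B"
    using Cons.prems by simp
  then show ?case
    using diag_sum_transpose[OF B foldr_diag_sum_carrier] Cons.IH by simp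
qed simp

lemma foldr_diag_sum_one: "foldr diag_sum (map (\<lambda>k. 1\<^sub>m k) ks) (1\<^sub>m 0) = 1\<^sub>m (sum_list ks)"
  by (induction ks) (simp_all add: diag_sum_one)

lemma sig_dsum_list_apply: "sig_dsum_list ss i j = foldr diag_sum (map (\<lambda>s. s i j) ss) (1\<^sub>m 0)"
  by (induction ss) (simp_all add: sig_dsum_list_def sig_dsum_def sig_empty_def)

lemma sig_dsum_list_normal_form:
  "sig_dsum_list (replicate d1 iota_pos @ replicate dm1 iota_neg @ map sig_theta \<theta>s) i j =
     (if i = 1 \<and> j = 2 then orth_normal_form d1 dm1 \<theta>s
      else if i = 2 \<and> j = 1 then (orth_normal_form d1 dm1 \<theta>s)\<^sup>T
      else 1\<^sub>m (d1 + dm1 + 2 * length \<theta>s))"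
proof -
  let ?ss = "replicate d1 iota_pos @ replicate dm1 iota_neg @ map sig_theta \<theta>s"
  let ?Bs = "replicate d1 (mat 1 1 (\<lambda>_. 1)) @ replicate dm1 (mat 1 1 (\<lambda>_. -1)) @ map rot_mat \<theta>s"
  have transpose_const: "(mat k k (\<lambda>_. c))\<^sup>T = (mat k k (\<lambda>_. c) :: real mat)" for k c
    by (rule eq_matI) auto
  have one_11: "mat 1 1 (\<lambda>_. 1) = (1\<^sub>m 1 :: real mat)"
    by (rule eq_matI) auto
  consider "i = 1" "j = 2" | "i = 2" "j = 1" | "\<not> (i = 1 \<and> j = 2)" "\<not> (i = 2 \<and> j = 1)"
    by blast
  then show ?thesis
  proof cases
    case 1
    then have "map (\<lambda>s. s i j) ?ss = ?Bs"
      by (simp add: iota_pos_def iota_neg_def sig_theta_def o_def)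
    then show ?thesis
      using 1 by (simp only: sig_dsum_list_apply orth_normal_form_def) simp
  next
    case 2
    then have "map (\<lambda>s. s i j) ?ss = map transpose_mat ?Bs"
      by (simp add: iota_pos_def iota_neg_def sig_theta_def o_def transpose_const)
    moreover have "(orth_normal_form d1 dm1 \<theta>s)\<^sup>T = foldr diag_sum (map transpose_mat ?Bs) (1\<^sub>m 0)"
      unfolding orth_normal_form_def by (rule transpose_foldr_diag_sum) (auto simp: rot_mat_def)
    ultimately show ?thesis
      using 2 by (simp only: sig_dsum_list_apply) simp
  next
    case 3
    then have "iota_pos i j = 1\<^sub>m 1" "iota_neg i j = 1\<^sub>m 1" "sig_theta \<theta> i j = 1\<^sub>m 2" for \<theta>
      by (auto simp: iota_pos_def iota_neg_def sig_theta_def one_11)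
    then have "map (\<lambda>s. s i j) ?ss
        = map (\<lambda>k. 1\<^sub>m k) (replicate d1 1 @ replicate dm1 1 @ replicate (length \<theta>s) 2)"
      by (simp add: o_def map_replicate_const)
    then show ?thesis
      using 3 by (simp only: sig_dsum_list_apply foldr_diag_sum_one) (simp add: sum_list_replicate ac_simps)
  qed
qed

subsection \<open>Gauge transformations on the cycle\<close>

lemma is_signatureD:
  assumes "is_signature n d \<sigma>" "cyc_adj n i j"
  shows "\<sigma> i j \<in> orth_group d" "\<sigma> j i = (\<sigma> i j)\<^sup>T"
  using assms unfolding is_signature_def by auto

lemma cyc_adj_next: "i \<in> {1..n} \<Longrightarrow> cyc_adj n i (i mod n + 1)"
  unfolding cyc_adj_def by (auto simp: Suc_le_eq)

lemma orth_group_intertwine_transpose: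
  fixes X Y S T :: "real mat"
  assumes X: "X \<in> carrier_mat d d" and Y: "Y \<in> carrier_mat d d"
    and S: "S \<in> orth_group d" and T: "T \<in> orth_group d" and XS: "X * S = T * Y"
  shows "Y * S\<^sup>T = T\<^sup>T * X"
proof -
  note s = orth_groupD[OF S] and t = orth_groupD[OF T]
  have "T\<^sup>T * X = T\<^sup>T * (X * S * S\<^sup>T)"
    using X s by simp
  also have "\<dots> = (T\<^sup>T * T) * (Y * S\<^sup>T)"
    unfolding XS using Y s(1) t(1) assoc_mult_mat[of "T\<^sup>T" d d T d "Y * S\<^sup>T" d] by simp
  also have "\<dots> = Y * S\<^sup>T"
    using Y s(1) t by simp
  finally show ?thesis
    by simp
qed

lemma sig_equiv_of_forward_edges:
  assumes \<sigma>: "is_signature n d \<sigma>" and \<tau>: "is_signature n d \<tau>"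
    and f: "\<And>i. i \<in> {1..n} \<Longrightarrow> f i \<in> orth_group d"
    and fwd: "\<And>i. i \<in> {1..n} \<Longrightarrow> f i * \<sigma> i (i mod n + 1) = \<tau> i (i mod n + 1) * f (i mod n + 1)"
  shows "sig_equiv n d \<sigma> \<tau>"
  unfolding sig_equiv_def
proof (intro exI[of _ f] conjI ballI allI impI)
  fix i j assume ij: "cyc_adj n i j"
  show "f i * \<sigma> i j = \<tau> i j * f j"
  proof (cases "j = i mod n + 1")
    case True
    then show ?thesis
      using fwd ij unfolding cyc_adj_def by auto
  next
    case False
    then have i: "i = j mod n + 1" and ij_range: "i \<in> {1..n}" "j \<in> {1..n}"
      using ij unfolding cyc_adj_def by auto
    have ji: "cyc_adj n j i"
      using ij unfolding cyc_adj_def by auto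
    have "f j * \<sigma> j i = \<tau> j i * f i"
      using fwd[OF ij_range(2)] i by simp
    then have "f i * (\<sigma> j i)\<^sup>T = (\<tau> j i)\<^sup>T * f j"
      using is_signatureD(1)[OF \<sigma> ji] is_signatureD(1)[OF \<tau> ji] f ij_range orth_groupD(1)
      by (intro orth_group_intertwine_transpose) auto
    then show ?thesis
      using is_signatureD(2)[OF \<sigma> ji] is_signatureD(2)[OF \<tau> ji] by simp
  qed
qed (use f in auto)

text \<open>The product \<open>\<sigma> 2 3 * \<sigma> 3 4 * \<dots> * \<sigma> (k + 1) (k + 2)\<close> along the path \<open>2, 3, \<dots>, k + 2\<close>,
  where vertex \<open>n + 1\<close> is vertex \<open>1\<close>.\<close>

primrec cycle_transport :: "nat \<Rightarrow> nat \<Rightarrow> (nat \<Rightarrow> nat \<Rightarrow> real mat) \<Rightarrow> nat \<Rightarrow> real mat" where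
  "cycle_transport n d \<sigma> 0 = 1\<^sub>m d"
| "cycle_transport n d \<sigma> (Suc k) = cycle_transport n d \<sigma> k * \<sigma> (k + 2) ((k + 2) mod n + 1)"

definition cycle_gauge :: "nat \<Rightarrow> nat \<Rightarrow> (nat \<Rightarrow> nat \<Rightarrow> real mat) \<Rightarrow> nat \<Rightarrow> real mat" where
  "cycle_gauge n d \<sigma> i = cycle_transport n d \<sigma> (if i = 1 then n - 1 else i - 2)"

definition cycle_holonomy :: "nat \<Rightarrow> nat \<Rightarrow> (nat \<Rightarrow> nat \<Rightarrow> real mat) \<Rightarrow> real mat" where
  "cycle_holonomy n d \<sigma> = cycle_gauge n d \<sigma> 1 * \<sigma> 1 2"

lemma cycle_transport_orth_group:
  assumes "is_signature n d \<sigma>" "k < n"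
  shows "cycle_transport n d \<sigma> k \<in> orth_group d"
  using assms(2)
proof (induction k)
  case (Suc k)
  then have "\<sigma> (k + 2) ((k + 2) mod n + 1) \<in> orth_group d"
    using is_signatureD(1)[OF assms(1) cyc_adj_next[of "k + 2" n]] by simp
  then show ?case
    using Suc by (simp add: orth_group_mult)
qed (simp add: orth_group_one)

lemma cycle_gauge_orth_group:
  "is_signature n d \<sigma> \<Longrightarrow> i \<in> {1..n} \<Longrightarrow> cycle_gauge n d \<sigma> i \<in> orth_group d"
  unfolding cycle_gauge_def by (rule cycle_transport_orth_group) auto

lemma cycle_gauge_next:
  assumes "2 \<le> i" "i \<le> n"
  shows "cycle_gauge n d \<sigma> i * \<sigma> i (i mod n + 1) = cycle_gauge n d \<sigma> (i mod n + 1)"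
proof -
  have "i - 1 = Suc (i - 2)" "i - 2 + 2 = i"
    using assms by auto
  then show ?thesis
    unfolding cycle_gauge_def using assms by (cases "i = n") auto
qed

lemma cycle_holonomy_orth_group:
  assumes "3 \<le> n" "is_signature n d \<sigma>"
  shows "cycle_holonomy n d \<sigma> \<in> orth_group d"
proof -
  have "cyc_adj n 1 2"
    using assms(1) unfolding cyc_adj_def by auto
  then show ?thesis
    unfolding cycle_holonomy_def using assms
    by (intro orth_group_mult cycle_gauge_orth_group is_signatureD(1)) auto
qed

lemma is_signature_single_edge:
  assumes D: "D \<in> orth_group d"
  shows "is_signature n d (\<lambda>i j. if i = 1 \<and> j = 2 then D else if i = 2 \<and> j = 1 then D\<^sup>T else 1\<^sub>m d)"
  unfolding is_signature_def using D orth_groupD(1)[OF D]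
  by (auto intro: orth_group_transpose orth_group_one)

lemma sig_equiv_holonomy:
  assumes n: "3 \<le> n" and \<sigma>: "is_signature n d \<sigma>"
    and KD: "orth_similar d (cycle_holonomy n d \<sigma>) D"
    and \<tau>: "\<And>i j. \<tau> i j = (if i = 1 \<and> j = 2 then D else if i = 2 \<and> j = 1 then D\<^sup>T else 1\<^sub>m d)"
  shows "sig_equiv n d \<sigma> \<tau>"
proof -
  let ?g = "cycle_gauge n d \<sigma>"
  obtain P where P: "P \<in> orth_group d" and PK: "P * cycle_holonomy n d \<sigma> * P\<^sup>T = D"
    using KD unfolding orth_similar_def by auto
  have K: "cycle_holonomy n d \<sigma> \<in> orth_group d"
    by (rule cycle_holonomy_orth_group[OF n \<sigma>])
  note p = orth_groupD[OF P] and k = orth_groupD[OF K]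
  have g: "?g i \<in> carrier_mat d d" if "i \<in> {1..n}" for i
    using orth_groupD(1)[OF cycle_gauge_orth_group[OF \<sigma> that]] .
  have \<sigma>_next: "\<sigma> i (i mod n + 1) \<in> carrier_mat d d" if "i \<in> {1..n}" for i
    using orth_groupD(1)[OF is_signatureD(1)[OF \<sigma> cyc_adj_next[OF that]]] .
  have D: "D \<in> orth_group d"
    unfolding PK[symmetric] by (intro orth_group_mult P K orth_group_transpose)
  have "\<tau> = (\<lambda>i j. if i = 1 \<and> j = 2 then D else if i = 2 \<and> j = 1 then D\<^sup>T else 1\<^sub>m d)"
    using \<tau> by (intro ext)
  then have "is_signature n d \<tau>"
    using is_signature_single_edge[OF D] by simp
  moreover have "P * ?g i \<in> orth_group d" if "i \<in> {1..n}" for i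
    using P cycle_gauge_orth_group[OF \<sigma> that] by (rule orth_group_mult)
  moreover have "P * ?g i * \<sigma> i (i mod n + 1) = \<tau> i (i mod n + 1) * (P * ?g (i mod n + 1))"
    if i: "i \<in> {1..n}" for i
  proof (cases "i = 1")
    case True
    have "P * ?g 1 * \<sigma> 1 (1 mod n + 1) = P * cycle_holonomy n d \<sigma>"
      unfolding cycle_holonomy_def using assoc_mult_mat[OF p(1) g[OF i] \<sigma>_next[OF i]] True n
      by (simp add: numeral_2_eq_2)
    also have "\<dots> = P * cycle_holonomy n d \<sigma> * (P\<^sup>T * P)"
      using p k by simp
    also have "\<dots> = D * (P * ?g 2)"
      unfolding PK[symmetric] cycle_gauge_def using p k by (simp add: assoc_mult_mat[of _ d d _ d _ d])
    finally show ?thesis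
      using True n \<tau> by (simp add: numeral_2_eq_2)
  next
    case False
    have "P * ?g i * \<sigma> i (i mod n + 1) = P * (?g i * \<sigma> i (i mod n + 1))"
      using assoc_mult_mat[OF p(1) g[OF i] \<sigma>_next[OF i]] .
    then have "P * ?g i * \<sigma> i (i mod n + 1) = P * ?g (i mod n + 1)"
      using cycle_gauge_next[of i n d \<sigma>] False i by simp
    moreover have "\<tau> i (i mod n + 1) = 1\<^sub>m d"
      using False i n \<tau> by (cases "i = n") auto
    ultimately show ?thesis
      using p g cyc_adj_next[OF i] unfolding cyc_adj_def by auto
  qed
  ultimately show ?thesis
    using sig_equiv_of_forward_edges[OF \<sigma>, of \<tau> "\<lambda>i. P * ?g i"] by blast
qed

theorem proposition2p11:
  fixes n d :: nat and \<sigma> :: "nat \<Rightarrow> nat \<Rightarrow> real mat"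
  assumes "n \<ge> 3"
    and "is_signature n d \<sigma>"
  shows "\<exists>d1 dm1 :: nat. \<exists>\<theta>s :: real list.
           (\<forall>\<theta>\<in>set \<theta>s. \<theta> \<in> {0<..<pi} \<union> {pi<..<2*pi}) \<and>
           d1 + dm1 + 2 * length \<theta>s = d \<and>
           sig_equiv n d \<sigma>
             (sig_dsum_list (replicate d1 iota_pos @ replicate dm1 iota_neg
                             @ map sig_theta \<theta>s))"
proof -
  obtain d1 dm1 \<theta>s where \<theta>s: "\<forall>\<theta>\<in>set \<theta>s. \<theta> \<in> {0<..<pi} \<union> {pi<..<2*pi}"
    and dim: "d1 + dm1 + 2 * length \<theta>s = d"
    and normal_form: "orth_similar d (cycle_holonomy n d \<sigma>) (orth_normal_form d1 dm1 \<theta>s)"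
    using orth_group_normal_form[OF cycle_holonomy_orth_group[OF assms]] by blast
  have "sig_equiv n d \<sigma> (sig_dsum_list (replicate d1 iota_pos @ replicate dm1 iota_neg @ map sig_theta \<theta>s))"
    using sig_equiv_holonomy[OF assms normal_form] sig_dsum_list_normal_form dim by simp
  then show ?thesis
    using \<theta>s dim by blast
qed

end
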